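(* Let $G$ be a connected nonbipartite graph with vertex set $\{u_1,\dots,u_m\}$ and $\kappa(G)=\delta(G)>0$, and let $n\ge3$. Let $S\subseteq V(G\times K_n)$ satisfy: (1) $|S|=(n-1)\delta(G)$; (2) $S_i\setminus S\neq\varnothing$ for every $i=1,\dots,m$; (3) $G\times K_n-S$ has no isolated vertex. Then $G\times K_n-S$ is connected.
   Context: The Kronecker product $G_1\times G_2$ has vertex set $V(G_1)\times V(G_2)$, with $(u_1,v_1)(u_2,v_2)$ an edge iff $u_1u_2\in E(G_1)$ and $v_1v_2\in E(G_2)$. Write $V(K_n)=\{v_1,\dots,v_n\}$ and $S_i=\{u_i\}\times V(K_n)$ for $i=1,\dots,m$. *)

theory Defs
  imports Main
begin

text \<open>A finite simple graph is given by a vertex set V and a symmetric, irreflexive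
edge relation E (only edges between vertices of V matter).\<close>

definition simple_graph :: "'a set \<Rightarrow> ('a \<Rightarrow> 'a \<Rightarrow> bool) \<Rightarrow> bool" where
  "simple_graph V E \<longleftrightarrow> finite V \<and> (\<forall>x y. E x y \<longrightarrow> E y x) \<and> (\<forall>x. \<not> E x x)"

definition adj_in :: "'a set \<Rightarrow> ('a \<Rightarrow> 'a \<Rightarrow> bool) \<Rightarrow> 'a \<Rightarrow> 'a \<Rightarrow> bool" where
  "adj_in V E x y \<longleftrightarrow> x \<in> V \<and> y \<in> V \<and> E x y"

definition connected_graph :: "'a set \<Rightarrow> ('a \<Rightarrow> 'a \<Rightarrow> bool) \<Rightarrow> bool" where
  "connected_graph V E \<longleftrightarrow> V \<noteq> {} \<and> (\<forall>x\<in>V. \<forall>y\<in>V. (adj_in V E)\<^sup>*\<^sup>* x y)"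

definition bipartite :: "'a set \<Rightarrow> ('a \<Rightarrow> 'a \<Rightarrow> bool) \<Rightarrow> bool" where
  "bipartite V E \<longleftrightarrow> (\<exists>A \<subseteq> V. \<forall>x\<in>V. \<forall>y\<in>V. E x y \<longrightarrow> (x \<in> A \<longleftrightarrow> y \<notin> A))"

definition degree :: "'a set \<Rightarrow> ('a \<Rightarrow> 'a \<Rightarrow> bool) \<Rightarrow> 'a \<Rightarrow> nat" where
  "degree V E x = card {y \<in> V. E x y}"

definition min_degree :: "'a set \<Rightarrow> ('a \<Rightarrow> 'a \<Rightarrow> bool) \<Rightarrow> nat" where
  "min_degree V E = Min (degree V E ` V)"

text \<open>Vertex connectivity: least number of vertices whose removal leaves a
disconnected graph or a graph with at most one vertex (so kappa(K_m) = m - 1).\<close>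
definition vertex_connectivity :: "'a set \<Rightarrow> ('a \<Rightarrow> 'a \<Rightarrow> bool) \<Rightarrow> nat" where
  "vertex_connectivity V E =
     Min {card X | X. X \<subseteq> V \<and> (\<not> connected_graph (V - X) E \<or> card (V - X) \<le> 1)}"

definition isolated_vertex :: "'a set \<Rightarrow> ('a \<Rightarrow> 'a \<Rightarrow> bool) \<Rightarrow> 'a \<Rightarrow> bool" where
  "isolated_vertex V E x \<longleftrightarrow> x \<in> V \<and> (\<forall>y\<in>V. \<not> E x y)"

definition kron_K_verts :: "'a set \<Rightarrow> nat \<Rightarrow> ('a \<times> nat) set" where
  "kron_K_verts V n = V \<times> {0..<n}"

definition kron_K_edge :: "('a \<Rightarrow> 'a \<Rightarrow> bool) \<Rightarrow> ('a \<times> nat) \<Rightarrow> ('a \<times> nat) \<Rightarrow> bool" where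
  "kron_K_edge E p q \<longleftrightarrow> E (fst p) (fst q) \<and> snd p \<noteq> snd q"

end

theory Submission
  imports Defs
begin

text \<open>
  Suppose R = G x K_n - S were disconnected and split R into a union C of
  components and its complement D, with no edge between them.  For every vertex u of G the
  surviving part of the fibre {u} x K_n falls into the layers lying in C and those lying in D.
  If u ~ v in G, a C-layer i of u and a D-layer j of v must coincide (otherwise (u,i) ~ (v,j)),
  so each side of such an edge survives in a single layer, i.e. loses n - 1 vertices to S.

  If no fibre meets both C and D, the fibres split V(G) into two nonempty parts; since
  kappa(G) = delta(G) > 0 the edge boundary of this cut has at least delta + 1 vertices, each
  losing n - 1 vertices, so |S| >= (n - 1)(delta + 1), too many.  If some fibre is "mixed"
  (meets both sides), the absence of isolated vertices forces it to consist of exactly one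
  C-layer and one D-layer, and a counting argument over neighbourhoods shows that all
  neighbours of a mixed vertex are mixed; by connectivity all fibres are mixed, and the
  C-layers then 2-colour G, contradicting that G is not bipartite.
\<close>

subsection \<open>General facts about finite simple graphs\<close>

lemma vertex_connectivity_le_separator:
  assumes "finite V" "X \<subseteq> V" "\<not> connected_graph (V - X) E"
  shows "vertex_connectivity V E \<le> card X"
proof -
  have "{card X |X. X \<subseteq> V \<and> (\<not> connected_graph (V - X) E \<or> card (V - X) \<le> 1)} \<subseteq> card ` Pow V"
    by auto
  then have "finite {card X |X. X \<subseteq> V \<and> (\<not> connected_graph (V - X) E \<or> card (V - X) \<le> 1)}"
    using assms(1) finite_subset by blast
  then show ?thesis unfolding vertex_connectivity_def
    by (rule Min_le) (use assms in auto)
qed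

lemma min_degree_le_degree:
  assumes "simple_graph V E" "u \<in> V"
  shows "min_degree V E \<le> degree V E u"
  using assms Min_le[of "degree V E ` V" "degree V E u"]
  unfolding min_degree_def simple_graph_def by auto

lemma closed_nbhd_card:
  assumes "simple_graph V E" "u \<in> V"
  shows "min_degree V E + 1 \<le> card (insert u {v \<in> V. E u v})"
proof -
  have "finite V" "\<not> E u u" using assms(1) unfolding simple_graph_def by auto
  then have "card (insert u {v \<in> V. E u v}) = degree V E u + 1"
    by (simp add: degree_def)
  then show ?thesis using min_degree_le_degree[OF assms] by simp
qed

lemma disconnected_split:
  assumes "R \<noteq> {}" and "\<not> connected_graph R E"
  obtains C where "C \<subseteq> R" "C \<noteq> {}" "R - C \<noteq> {}" "\<forall>p\<in>C. \<forall>q\<in>R - C. \<not> E p q"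
proof -
  from assms obtain x y where x: "x \<in> R" and y: "y \<in> R" and xy: "\<not> (adj_in R E)\<^sup>*\<^sup>* x y"
    unfolding connected_graph_def by blast
  define C where "C = {z. (adj_in R E)\<^sup>*\<^sup>* x z}"
  have "C \<subseteq> R"
  proof
    fix z assume "z \<in> C"
    then have "(adj_in R E)\<^sup>*\<^sup>* x z" by (simp add: C_def)
    then show "z \<in> R" using x by (induction rule: rtranclp_induct) (auto simp: adj_in_def)
  qed
  moreover have "x \<in> C" "y \<in> R - C" using y xy by (auto simp: C_def)
  moreover have "\<not> E p q" if "p \<in> C" "q \<in> R - C" for p q
  proof
    assume "E p q"
    with that \<open>C \<subseteq> R\<close> have "adj_in R E p q" by (auto simp: adj_in_def)
    with \<open>p \<in> C\<close> have "q \<in> C" by (auto simp: C_def intro: rtranclp.rtrancl_into_rtrancl)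
    with that show False by simp
  qed
  ultimately show ?thesis using that by blast
qed

lemma connected_closed_subset:
  assumes "connected_graph V E" "M \<subseteq> V" "a \<in> M"
    and closed: "\<And>u v. u \<in> M \<Longrightarrow> v \<in> V \<Longrightarrow> E u v \<Longrightarrow> v \<in> M"
  shows "M = V"
proof
  show "V \<subseteq> M"
  proof
    fix y assume "y \<in> V"
    with assms(1-3) have "(adj_in V E)\<^sup>*\<^sup>* a y" unfolding connected_graph_def by blast
    then show "y \<in> M"
      by (induction rule: rtranclp_induct) (use assms(3) closed in \<open>auto simp: adj_in_def\<close>)
  qed
qed (rule assms(2))

definition inner_boundary :: "'a set \<Rightarrow> ('a \<Rightarrow> 'a \<Rightarrow> bool) \<Rightarrow> 'a set \<Rightarrow> 'a set" where
  "inner_boundary V E P = {u \<in> P. \<exists>v \<in> V - P. E u v}"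

definition cut_boundary :: "'a set \<Rightarrow> ('a \<Rightarrow> 'a \<Rightarrow> bool) \<Rightarrow> 'a set \<Rightarrow> 'a set" where
  "cut_boundary V E P = inner_boundary V E P \<union> inner_boundary V E (V - P)"

lemma inner_boundary_separates:
  assumes "P \<subseteq> V" "a \<in> P - inner_boundary V E P" "b \<in> V - P"
  shows "\<not> connected_graph (V - inner_boundary V E P) E"
proof
  let ?X = "inner_boundary V E P"
  assume "connected_graph (V - ?X) E"
  moreover have "a \<in> V - ?X" "b \<in> V - ?X" using assms by (auto simp: inner_boundary_def)
  ultimately have path: "(adj_in (V - ?X) E)\<^sup>*\<^sup>* a b" unfolding connected_graph_def by blast
  have "z \<in> P" if "(adj_in (V - ?X) E)\<^sup>*\<^sup>* a z" for z
    using that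
  proof (induction rule: rtranclp_induct)
    case base then show ?case using assms by simp
  next
    case (step y z)
    then show ?case by (auto simp: adj_in_def inner_boundary_def)
  qed
  from this[OF path] show False using assms(3) by simp
qed

lemma cut_boundary_subset:
  assumes "P \<subseteq> V"
  shows "cut_boundary V E P \<subseteq> V"
  using assms by (auto simp: cut_boundary_def inner_boundary_def)

lemma cut_boundary_complement:
  assumes "P \<subseteq> V"
  shows "cut_boundary V E (V - P) = cut_boundary V E P"
  using assms by (auto simp: cut_boundary_def double_diff)

text \<open>One half of the boundary estimate: if P sticks out of its inner boundary X, then X
  separates G, so |X| >= kappa = delta > 0, and any neighbour across the cut of a vertex of X
  adds one more boundary vertex.\<close>
lemma cut_boundary_large_if_not_inner:
  assumes "simple_graph V E" "vertex_connectivity V E = min_degree V E" "0 < min_degree V E"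
    and "P \<subseteq> V" "V - P \<noteq> {}" "\<not> P \<subseteq> inner_boundary V E P"
  shows "min_degree V E + 1 \<le> card (cut_boundary V E P)"
proof -
  let ?X = "inner_boundary V E P"
  have fin: "finite V" and sym: "\<And>x y. E x y \<Longrightarrow> E y x"
    using assms(1) unfolding simple_graph_def by auto
  have XV: "?X \<subseteq> V" using assms(4) by (auto simp: inner_boundary_def)
  obtain a b where "a \<in> P - ?X" "b \<in> V - P" using assms(5,6) by blast
  then have "\<not> connected_graph (V - ?X) E" by (rule inner_boundary_separates[OF assms(4)])
  then have X_large: "min_degree V E \<le> card ?X"
    using vertex_connectivity_le_separator[OF fin XV] assms(2) by metis
  then obtain x where "x \<in> ?X" using assms(3) by fastforce
  then obtain v where v: "v \<in> V - P" "E x v" "x \<in> P" by (auto simp: inner_boundary_def)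
  then have "v \<in> inner_boundary V E (V - P)" using sym assms(4) by (auto simp: inner_boundary_def)
  then have "insert v ?X \<subseteq> cut_boundary V E P" by (auto simp: cut_boundary_def)
  moreover have "finite (cut_boundary V E P)"
    using finite_subset[OF cut_boundary_subset[OF assms(4)] fin] .
  moreover have "card (insert v ?X) = card ?X + 1"
    using v finite_subset[OF XV fin] by (auto simp: inner_boundary_def)
  ultimately show ?thesis using X_large card_mono by (metis add_le_mono1 le_trans)
qed

lemma cut_boundary_large:
  assumes "simple_graph V E" "vertex_connectivity V E = min_degree V E" "0 < min_degree V E"
    and "P \<subseteq> V" "P \<noteq> {}" "V - P \<noteq> {}"
  shows "min_degree V E + 1 \<le> card (cut_boundary V E P)"
proof (cases "P \<subseteq> inner_boundary V E P")
  case False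
  then show ?thesis using cut_boundary_large_if_not_inner assms by blast
next
  case P_boundary: True
  show ?thesis
  proof (cases "V - P \<subseteq> inner_boundary V E (V - P)")
    case False
    moreover have "V - (V - P) \<noteq> {}" using assms(4,5) by auto
    ultimately show ?thesis
      using cut_boundary_large_if_not_inner[OF assms(1-3), of "V - P"] cut_boundary_complement[OF assms(4)]
      by auto
  next
    case True
    with P_boundary have "V \<subseteq> cut_boundary V E P"
      by (auto simp: cut_boundary_def)
    then have all: "cut_boundary V E P = V" using cut_boundary_subset[OF assms(4)] by blast
    obtain u where "u \<in> V" using assms(4,5) by auto
    have "finite V" using assms(1) unfolding simple_graph_def by simp
    then have "card (insert u {v \<in> V. E u v}) \<le> card V" using \<open>u \<in> V\<close> by (intro card_mono) auto
    then show ?thesis using closed_nbhd_card[OF assms(1) \<open>u \<in> V\<close>] all by simp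
  qed
qed

subsection \<open>A split of G x K_n - S\<close>

lemma kron_K_edge_sym:
  assumes "simple_graph V E" "kron_K_edge E p q"
  shows "kron_K_edge E q p"
  using assms unfolding simple_graph_def kron_K_edge_def by auto

locale kron_cut =
  fixes V :: "'a set" and E :: "'a \<Rightarrow> 'a \<Rightarrow> bool" and n :: nat
    and S C :: "('a \<times> nat) set"
  assumes simple: "simple_graph V E"
    and S_sub: "S \<subseteq> kron_K_verts V n"
    and fibres_survive: "\<forall>u\<in>V. ({u} \<times> {0..<n}) - S \<noteq> {}"
    and C_sub: "C \<subseteq> kron_K_verts V n - S"
    and C_closed: "\<And>p q. p \<in> C \<Longrightarrow> q \<in> kron_K_verts V n - S - C \<Longrightarrow> \<not> kron_K_edge E p q"
begin

definition S_layers :: "'a \<Rightarrow> nat set" where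
  "S_layers u = {i. (u, i) \<in> S}"

definition C_layers :: "'a \<Rightarrow> nat set" where
  "C_layers u = {i. (u, i) \<in> C}"

definition D_layers :: "'a \<Rightarrow> nat set" where
  "D_layers u = {i. (u, i) \<in> kron_K_verts V n - S - C}"

definition mixed :: "'a \<Rightarrow> bool" where
  "mixed u \<longleftrightarrow> u \<in> V \<and> C_layers u \<noteq> {} \<and> D_layers u \<noteq> {}"

lemma fin: "finite V"
  using simple unfolding simple_graph_def by simp

lemma E_sym: "E u v \<Longrightarrow> E v u"
  using simple unfolding simple_graph_def by blast

lemma surviving_layers_nonempty:
  assumes "u \<in> V"
  shows "C_layers u \<union> D_layers u \<noteq> {}"
  using fibres_survive assms C_sub
  by (fastforce simp: C_layers_def D_layers_def kron_K_verts_def)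

lemma layers_card:
  assumes "u \<in> V"
  shows "card (S_layers u) + card (C_layers u) + card (D_layers u) = n"
proof -
  have part: "{0..<n} = S_layers u \<union> C_layers u \<union> D_layers u"
    using assms S_sub C_sub by (auto simp: S_layers_def C_layers_def D_layers_def kron_K_verts_def)
  have "finite (S_layers u \<union> C_layers u \<union> D_layers u)"
    unfolding part[symmetric] by simp
  then have "finite (S_layers u)" "finite (C_layers u)" "finite (D_layers u)" by auto
  moreover have "S_layers u \<inter> C_layers u = {}" "(S_layers u \<union> C_layers u) \<inter> D_layers u = {}"
    using C_sub by (auto simp: S_layers_def C_layers_def D_layers_def)
  ultimately have "card {0..<n} = card (S_layers u) + card (C_layers u) + card (D_layers u)"
    unfolding part by (simp add: card_Un_disjoint)
  then show ?thesis by simp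
qed

lemma S_layers_sum_le:
  assumes "T \<subseteq> V"
  shows "(\<Sum>u\<in>T. card (S_layers u)) \<le> card S"
proof -
  have S_eq: "S = Sigma V S_layers"
    using S_sub by (auto simp: S_layers_def kron_K_verts_def)
  have "S_layers u \<subseteq> {0..<n}" for u
    using S_sub by (auto simp: S_layers_def kron_K_verts_def)
  then have "finite (S_layers u)" for u
    using finite_subset by blast
  then have "card (Sigma V S_layers) = (\<Sum>u\<in>V. card (S_layers u))"
    using fin by (simp add: card_SigmaI)
  then have "card S = (\<Sum>u\<in>V. card (S_layers u))"
    using S_eq by simp
  moreover have "(\<Sum>u\<in>T. card (S_layers u)) \<le> (\<Sum>u\<in>V. card (S_layers u))"
    using assms fin by (intro sum_mono2) auto
  ultimately show ?thesis by simp
qed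

text \<open>Key observation: along an edge uv of G, a C-layer of u and a D-layer of v coincide,
  since otherwise the two vertices would be adjacent in G x K_n.  Hence both are unique.\<close>
lemma cross_layers_eq:
  assumes "E u v" "i \<in> C_layers u" "j \<in> D_layers v"
  shows "i = j"
proof (rule ccontr)
  assume "i \<noteq> j"
  with assms have "kron_K_edge E (u, i) (v, j)" by (simp add: kron_K_edge_def)
  with assms(2,3) C_closed show False by (auto simp: C_layers_def D_layers_def)
qed

lemma cross_layers:
  assumes "E u v" "i \<in> C_layers u" "j \<in> D_layers v"
  shows "C_layers u = {j}" "D_layers v = {i}"
  using cross_layers_eq[OF assms(1)] assms(2,3) by blast+

text \<open>If no fibre is mixed, the C-side of G and the D-side form a cut of G; each of the at
  least delta + 1 vertices on its boundary keeps a single layer, which makes S too large.\<close>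
lemma unmixed_deletion_large:
  assumes "vertex_connectivity V E = min_degree V E" "0 < min_degree V E"
    and "C \<noteq> {}" "kron_K_verts V n - S - C \<noteq> {}" "\<And>u. \<not> mixed u"
  shows "(min_degree V E + 1) * (n - 1) \<le> card S"
proof -
  define P where "P = {u \<in> V. C_layers u \<noteq> {}}"
  have P_compl: "V - P = {u \<in> V. D_layers u \<noteq> {}}"
    using surviving_layers_nonempty assms(5) by (auto simp: P_def mixed_def)
  have "P \<subseteq> V" by (auto simp: P_def)
  have "P \<noteq> {}" using assms(3) C_sub by (auto simp: P_def C_layers_def kron_K_verts_def)
  obtain a i where "(a, i) \<in> kron_K_verts V n - S - C" using assms(4) by auto
  then have "a \<in> V - P" unfolding P_compl by (auto simp: D_layers_def kron_K_verts_def)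
  then have "V - P \<noteq> {}" by blast
  have single: "card (S_layers u) = n - 1" if "u \<in> cut_boundary V E P" for u
  proof -
    have "u \<in> V" using that cut_boundary_subset[OF \<open>P \<subseteq> V\<close>] by blast
    have "card (C_layers u) + card (D_layers u) = 1"
    proof (cases "u \<in> P")
      case True
      with that obtain v where "v \<in> V - P" "E u v"
        by (auto simp: cut_boundary_def inner_boundary_def)
      have "C_layers u \<noteq> {}" "D_layers v \<noteq> {}"
        using True \<open>v \<in> V - P\<close> P_compl by (auto simp: P_def)
      then obtain i j where "i \<in> C_layers u" "j \<in> D_layers v" by blast
      then have "C_layers u = {j}" using cross_layers(1) \<open>E u v\<close> by blast
      moreover have "D_layers u = {}" using True assms(5) by (auto simp: P_def mixed_def)
      ultimately show ?thesis by simp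
    next
      case False
      with that obtain v where "v \<in> P" "E v u"
        using E_sym by (auto simp: cut_boundary_def inner_boundary_def)
      have "C_layers v \<noteq> {}" "D_layers u \<noteq> {}"
        using False \<open>v \<in> P\<close> \<open>u \<in> V\<close> P_compl by (auto simp: P_def)
      then obtain i j where "i \<in> C_layers v" "j \<in> D_layers u" by blast
      then have "D_layers u = {i}" using cross_layers(2) \<open>E v u\<close> by blast
      moreover have "C_layers u = {}" using False \<open>u \<in> V\<close> by (auto simp: P_def)
      ultimately show ?thesis by simp
    qed
    then show ?thesis using layers_card[OF \<open>u \<in> V\<close>] by simp
  qed
  have "(min_degree V E + 1) * (n - 1) \<le> card (cut_boundary V E P) * (n - 1)"
    using cut_boundary_large[OF simple assms(1,2) \<open>P \<subseteq> V\<close> \<open>P \<noteq> {}\<close> \<open>V - P \<noteq> {}\<close>]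
    by (rule mult_le_mono1)
  also have "\<dots> = (\<Sum>u\<in>cut_boundary V E P. card (S_layers u))"
    using single by simp
  also have "\<dots> \<le> card S"
    using S_layers_sum_le cut_boundary_subset[OF \<open>P \<subseteq> V\<close>] by blast
  finally show ?thesis .
qed

end

locale kron_cut_no_isolated = kron_cut +
  assumes no_isolated: "\<not> (\<exists>x. isolated_vertex (kron_K_verts V n - S) (kron_K_edge E) x)"
begin

lemma has_neighbour:
  assumes "p \<in> kron_K_verts V n - S"
  obtains v k where "(v, k) \<in> kron_K_verts V n - S" "kron_K_edge E p (v, k)"
proof -
  have "\<exists>q \<in> kron_K_verts V n - S. kron_K_edge E p q"
    using assms no_isolated unfolding isolated_vertex_def by blast
  then obtain q where "q \<in> kron_K_verts V n - S" "kron_K_edge E p q" by blast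
  then show ?thesis using that[of "fst q" "snd q"] by simp
qed

text \<open>A mixed fibre survives in exactly one C-layer and one D-layer: a neighbour of a
  D-vertex of the fibre lies in D and pins down the C-layer, and symmetrically.\<close>
lemma mixed_layers:
  assumes "mixed u"
  obtains c e where "C_layers u = {c}" "D_layers u = {e}" "c \<noteq> e"
proof -
  obtain c e where c: "c \<in> C_layers u" and e: "e \<in> D_layers u"
    using assms by (auto simp: mixed_def)
  have ue: "(u, e) \<in> kron_K_verts V n - S - C" using e by (simp add: D_layers_def)
  then have "(u, e) \<in> kron_K_verts V n - S" by blast
  then obtain v k where vk: "(v, k) \<in> kron_K_verts V n - S" "kron_K_edge E (u, e) (v, k)"
    by (rule has_neighbour)
  have "(v, k) \<notin> C"
  proof
    assume "(v, k) \<in> C"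
    from C_closed[OF this ue] kron_K_edge_sym[OF simple vk(2)] show False by simp
  qed
  with vk have k: "k \<in> D_layers v" and "E u v" by (auto simp: D_layers_def kron_K_edge_def)
  have C_single: "C_layers u = {k}" by (rule cross_layers(1)[OF \<open>E u v\<close> c k])
  have uc: "(u, c) \<in> C" using c by (simp add: C_layers_def)
  then have "(u, c) \<in> kron_K_verts V n - S" using C_sub by blast
  then obtain v' k' where vk': "(v', k') \<in> kron_K_verts V n - S" "kron_K_edge E (u, c) (v', k')"
    by (rule has_neighbour)
  have "(v', k') \<in> C"
  proof (rule ccontr)
    assume "(v', k') \<notin> C"
    with vk'(1) have "(v', k') \<in> kron_K_verts V n - S - C" by blast
    from C_closed[OF uc this] vk'(2) show False by simp
  qed
  with vk' have k': "k' \<in> C_layers v'" and "E v' u"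
    by (auto simp: C_layers_def kron_K_edge_def E_sym)
  have D_single: "D_layers u = {k'}" by (rule cross_layers(2)[OF \<open>E v' u\<close> k' e])
  have "k \<noteq> k'" using C_single D_single by (auto simp: C_layers_def D_layers_def)
  with C_single D_single show ?thesis using that by blast
qed

lemma mixed_S_layers:
  assumes "mixed u"
  shows "card (S_layers u) = n - 2"
proof -
  obtain c e where "C_layers u = {c}" "D_layers u = {e}" using mixed_layers[OF assms] .
  with layers_card[of u] assms show ?thesis by (simp add: mixed_def)
qed

lemma mixed_edge_swap:
  assumes "mixed u" "mixed v" "E u v"
  shows "C_layers v = D_layers u" "D_layers v = C_layers u"
proof -
  obtain c e where u: "C_layers u = {c}" "D_layers u = {e}" using mixed_layers[OF assms(1)] .
  obtain c' e' where v: "C_layers v = {c'}" "D_layers v = {e'}" using mixed_layers[OF assms(2)] .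
  show "D_layers v = C_layers u" using cross_layers(2)[OF assms(3), of c e'] u v by simp
  show "C_layers v = D_layers u" using cross_layers(1)[OF E_sym[OF assms(3)], of c' e] u v by simp
qed

lemma unmixed_neighbour:
  assumes "mixed u" "v \<in> V" "\<not> mixed v" "E u v"
  shows "(C_layers v = D_layers u \<and> D_layers v = {}) \<or> (C_layers v = {} \<and> D_layers v = C_layers u)"
proof -
  obtain c e where u: "C_layers u = {c}" "D_layers u = {e}" using mixed_layers[OF assms(1)] .
  show ?thesis
  proof (cases "C_layers v = {}")
    case True
    then obtain j where "j \<in> D_layers v" using surviving_layers_nonempty[OF assms(2)] by blast
    then have "D_layers v = {c}" using cross_layers(2)[OF assms(4)] u by simp
    with True u show ?thesis by simp
  next
    case False
    then obtain i where "i \<in> C_layers v" by blast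
    then have "C_layers v = {e}" using cross_layers(1)[OF E_sym[OF assms(4)]] u by simp
    moreover have "D_layers v = {}" using False assms(2,3) by (simp add: mixed_def)
    ultimately show ?thesis using u by simp
  qed
qed

lemma unmixed_neighbour_S_layers:
  assumes "mixed u" "v \<in> V" "\<not> mixed v" "E u v"
  shows "card (S_layers v) = n - 1"
proof -
  obtain c e where "C_layers u = {c}" "D_layers u = {e}" using mixed_layers[OF assms(1)] .
  with unmixed_neighbour[OF assms] layers_card[OF assms(2)] show ?thesis by auto
qed

text \<open>Two adjacent mixed vertices have no common neighbour: it would have to carry both
  layers of each on swapped sides.\<close>
lemma mixed_edge_no_common_neighbour:
  assumes "mixed x" "mixed x'" "E x x'" "v \<in> V" "E x v" "E x' v"
  shows False
proof -
  obtain c e where x: "C_layers x = {c}" "D_layers x = {e}" "c \<noteq> e"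
    using mixed_layers[OF assms(1)] .
  have x': "C_layers x' = {e}" "D_layers x' = {c}" using mixed_edge_swap[OF assms(1-3)] x by simp_all
  show False
  proof (cases "mixed v")
    case True
    then show False using mixed_edge_swap(1)[OF assms(1) True assms(5)]
        mixed_edge_swap(1)[OF assms(2) True assms(6)] x x' by simp
  next
    case False
    then show False using unmixed_neighbour[OF assms(1,4) False assms(5)]
        unmixed_neighbour[OF assms(2,4) False assms(6)] x x' by auto
  qed
qed

lemma nbhd_S_layers:
  assumes "mixed x" "2 \<le> n"
  shows "(\<Sum>v\<in>{v \<in> V. E x v}. card (S_layers v))
           = (n - 2) * degree V E x + card {v \<in> V. E x v \<and> \<not> mixed v}"
proof -
  let ?N = "{v \<in> V. E x v}"
  have "finite ?N" using fin by simp
  have "card (S_layers v) = (n - 2) + (if \<not> mixed v then 1 else 0)" if "v \<in> ?N" for v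
    using that assms mixed_S_layers unmixed_neighbour_S_layers[OF assms(1)] by auto
  then have "(\<Sum>v\<in>?N. card (S_layers v)) = (\<Sum>v\<in>?N. (n - 2) + (if \<not> mixed v then 1 else 0))"
    by (rule sum.cong[OF refl])
  also have "\<dots> = (n - 2) * card ?N + (\<Sum>v\<in>?N. if \<not> mixed v then 1 else 0)"
    by (simp add: sum.distrib)
  also have "(\<Sum>v\<in>?N. if \<not> mixed v then 1 else 0) = card {v \<in> ?N. \<not> mixed v}"
    using sum.inter_filter[OF \<open>finite ?N\<close>, of "\<lambda>_. 1::nat" "\<lambda>v. \<not> mixed v"] by simp
  finally show ?thesis by (simp add: degree_def)
qed

lemma mixed_edge_S_layers:
  assumes "mixed x" "mixed x'" "E x x'" "2 \<le> n"
  shows "(n - 2) * degree V E x + card {v \<in> V. E x v \<and> \<not> mixed v} + (n - 2) * degree V E x'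
           \<le> card S"
proof -
  let ?N = "\<lambda>x. {w \<in> V. E x w}"
  have "?N x \<inter> ?N x' = {}"
    using mixed_edge_no_common_neighbour[OF assms(1-3)] by blast
  then have "(\<Sum>w\<in>?N x. card (S_layers w)) + (\<Sum>w\<in>?N x'. card (S_layers w))
               = (\<Sum>w\<in>?N x \<union> ?N x'. card (S_layers w))"
    using fin by (simp add: sum.union_disjoint)
  also have "\<dots> \<le> card S" by (rule S_layers_sum_le) auto
  finally show ?thesis
    using nbhd_S_layers[OF assms(1,4)] nbhd_S_layers[OF assms(2,4)] by linarith
qed

lemma mixed_closed_nbhd_S_layers:
  assumes "mixed x" "2 \<le> n"
  shows "(n - 2) + (n - 2) * degree V E x + card {v \<in> V. E x v \<and> \<not> mixed v} \<le> card S"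
proof -
  have "x \<in> V" "\<not> E x x" using assms(1) simple by (auto simp: mixed_def simple_graph_def)
  then have "card (S_layers x) + (\<Sum>w\<in>{w \<in> V. E x w}. card (S_layers w))
               = (\<Sum>w\<in>insert x {w \<in> V. E x w}. card (S_layers w))"
    using fin by simp
  also have "\<dots> \<le> card S" using \<open>x \<in> V\<close> by (intro S_layers_sum_le) auto
  finally show ?thesis using mixed_S_layers[OF assms(1)] nbhd_S_layers[OF assms] by simp
qed

text \<open>Otherwise the deletions around x and, if it exists, a mixed neighbour
  of x, or else around x together with its neighbours, already exceed (n - 1) delta.\<close>
lemma mixed_closed:
  assumes S_small: "card S \<le> (n - 1) * min_degree V E" and "3 \<le> n"
    and "mixed x" "v \<in> V" "E x v"
  shows "mixed v"
proof (rule ccontr)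
  assume "\<not> mixed v"
  let ?\<delta> = "min_degree V E"
  have "x \<in> V" using \<open>mixed x\<close> by (simp add: mixed_def)
  have "finite {w \<in> V. E x w \<and> \<not> mixed w}" using fin by simp
  then have unmixed: "1 \<le> card {w \<in> V. E x w \<and> \<not> mixed w}"
    using \<open>v \<in> V\<close> \<open>E x v\<close> \<open>\<not> mixed v\<close> by (auto simp: Suc_le_eq card_gt_0_iff)
  have deg_x: "?\<delta> \<le> degree V E x" by (rule min_degree_le_degree[OF simple \<open>x \<in> V\<close>])
  show False
  proof (cases "\<exists>x' \<in> V. E x x' \<and> mixed x'")
    case True
    then obtain x' where "x' \<in> V" "E x x'" "mixed x'" by blast
    have "(n - 1) * ?\<delta> \<le> ((n - 2) + (n - 2)) * ?\<delta>"
      using \<open>3 \<le> n\<close> by (intro mult_le_mono1) simp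
    also have "\<dots> \<le> (n - 2) * degree V E x + (n - 2) * degree V E x'"
      using deg_x min_degree_le_degree[OF simple \<open>x' \<in> V\<close>]
      by (simp add: add_mult_distrib add_mono)
    finally show False
      using mixed_edge_S_layers[OF \<open>mixed x\<close> \<open>mixed x'\<close> \<open>E x x'\<close>] unmixed S_small \<open>3 \<le> n\<close>
      by linarith
  next
    case False
    then have "card {w \<in> V. E x w \<and> \<not> mixed w} = degree V E x"
      by (auto simp: degree_def intro: arg_cong[where f = card])
    moreover have "(n - 1) * ?\<delta> \<le> (n - 1) * degree V E x" using deg_x by simp
    moreover have "n - 1 = Suc (n - 2)" using \<open>3 \<le> n\<close> by simp
    then have "(n - 1) * degree V E x = (n - 2) * degree V E x + degree V E x" by simp
    ultimately show False
      using mixed_closed_nbhd_S_layers[OF \<open>mixed x\<close>] S_small \<open>3 \<le> n\<close> by linarith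
  qed
qed

text \<open>If every fibre is mixed, the vertices whose C-layer agrees with that of a fixed vertex
  form one side of a bipartition of G (the pair of layers is constant by connectivity, and
  adjacent vertices swap it).\<close>
lemma all_mixed_bipartite:
  assumes "connected_graph V E" "\<forall>u\<in>V. mixed u"
  shows "bipartite V E"
proof -
  obtain u0 where "u0 \<in> V" using assms(1) unfolding connected_graph_def by blast
  let ?L = "C_layers u0 \<union> D_layers u0"
  have same_pair: "{u \<in> V. C_layers u \<union> D_layers u = ?L} = V"
  proof (rule connected_closed_subset[OF assms(1)])
    fix u v assume "u \<in> {u \<in> V. C_layers u \<union> D_layers u = ?L}" "v \<in> V" "E u v"
    moreover have "C_layers v = D_layers u" "D_layers v = C_layers u"
      using mixed_edge_swap assms(2) calculation by auto
    ultimately show "v \<in> {u \<in> V. C_layers u \<union> D_layers u = ?L}" by blast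
  qed (use \<open>u0 \<in> V\<close> in auto)
  obtain c0 e0 where u0: "C_layers u0 = {c0}" "D_layers u0 = {e0}" "c0 \<noteq> e0"
    using mixed_layers assms(2) \<open>u0 \<in> V\<close> by blast
  have side: "C_layers u = {c0} \<and> D_layers u = {e0} \<or> C_layers u = {e0} \<and> D_layers u = {c0}"
    if "u \<in> V" for u
  proof -
    obtain c e where "C_layers u = {c}" "D_layers u = {e}" "c \<noteq> e"
      using mixed_layers assms(2) \<open>u \<in> V\<close> by blast
    moreover have "C_layers u \<union> D_layers u = ?L" using same_pair \<open>u \<in> V\<close> by blast
    ultimately have "{e, c} = {e0, c0}" using u0 by simp
    with \<open>C_layers u = {c}\<close> \<open>D_layers u = {e}\<close> show ?thesis by (auto simp: doubleton_eq_iff)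
  qed
  show ?thesis unfolding bipartite_def
  proof (intro exI[of _ "{u \<in> V. C_layers u = {c0}}"] conjI ballI impI)
    fix x y assume "x \<in> V" "y \<in> V" "E x y"
    then have "C_layers y = D_layers x"
      using mixed_edge_swap assms(2) by blast
    then show "x \<in> {u \<in> V. C_layers u = {c0}} \<longleftrightarrow> y \<notin> {u \<in> V. C_layers u = {c0}}"
      using side[OF \<open>x \<in> V\<close>] \<open>x \<in> V\<close> \<open>y \<in> V\<close> u0(3) by auto
  qed auto
qed

lemma mixed_forces_bipartite:
  assumes "connected_graph V E" "card S \<le> (n - 1) * min_degree V E" "3 \<le> n" "mixed u"
  shows "bipartite V E"
proof -
  have "{v. mixed v} = V"
  proof (rule connected_closed_subset[OF assms(1)])
    show "{v. mixed v} \<subseteq> V" "u \<in> {v. mixed v}" using assms(4) by (auto simp: mixed_def)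
    fix x v assume "x \<in> {v. mixed v}" "v \<in> V" "E x v"
    then show "v \<in> {v. mixed v}" using mixed_closed[OF assms(2,3)] by simp
  qed
  then show ?thesis using all_mixed_bipartite[OF assms(1)] by blast
qed

end

theorem mainTheorem4:
  fixes V :: "'a set" and E :: "'a \<Rightarrow> 'a \<Rightarrow> bool" and n :: nat and S :: "('a \<times> nat) set"
  assumes "simple_graph V E"
    and "connected_graph V E"
    and "\<not> bipartite V E"
    and "vertex_connectivity V E = min_degree V E"
    and "min_degree V E > 0"
    and "n \<ge> 3"
    and "S \<subseteq> kron_K_verts V n"
    and "card S = (n - 1) * min_degree V E"
    and "\<forall>u\<in>V. ({u} \<times> {0..<n}) - S \<noteq> {}"
    and "\<not> (\<exists>x. isolated_vertex (kron_K_verts V n - S) (kron_K_edge E) x)"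
  shows "connected_graph (kron_K_verts V n - S) (kron_K_edge E)"
proof (rule ccontr)
  let ?R = "kron_K_verts V n - S"
  assume disconnected: "\<not> connected_graph ?R (kron_K_edge E)"
  obtain u where "u \<in> V" using assms(2) unfolding connected_graph_def by blast
  with assms(9) have "?R \<noteq> {}" by (auto simp: kron_K_verts_def)
  obtain C where C: "C \<subseteq> ?R" "C \<noteq> {}" "?R - C \<noteq> {}"
    and C_closed: "\<forall>p\<in>C. \<forall>q\<in>?R - C. \<not> kron_K_edge E p q"
    by (rule disconnected_split[OF \<open>?R \<noteq> {}\<close> disconnected])
  interpret kron_cut_no_isolated V E n S C
    by unfold_locales (use assms(1,7,9,10) C(1) C_closed in blast)+
  show False
  proof (cases "\<exists>u. mixed u")
    case True
    then obtain u where "mixed u" by blast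
    with mixed_forces_bipartite[OF assms(2) eq_imp_le[OF assms(8)] assms(6)] assms(3)
    show False by blast
  next
    case False
    with unmixed_deletion_large assms(4,5) \<open>C \<noteq> {}\<close> \<open>?R - C \<noteq> {}\<close>
    have "(min_degree V E + 1) * (n - 1) \<le> card S" by blast
    moreover have "(min_degree V E + 1) * (n - 1) = card S + (n - 1)"
      using assms(8) by (simp add: algebra_simps)
    ultimately show False using assms(6) by linarith
  qed
qed

end
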